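(* Let $\mathcal{D}$ be a proof in $\mathsf{NIKm}$ of the polarised nested sequent $\Sigma$. Then there is a proof in $\mathbf{C}_{\mathbf{IK}}$ of the flat bi-nested sequent $\mathrm{fl}(\Sigma)$.
   Context: Formulas are generated by $A::=p\mid\bot\mid\top\mid A\wedge A\mid A\vee A\mid A\supset A\mid\Box A\mid\Diamond A$. Polarised nested sequents: either empty or $A_1^\bullet,\dots,A_k^\bullet,B_1^\circ,\dots,B_h^\circ,[\Sigma_1],\dots,[\Sigma_n]$ (a multiset), with $A_i,B_j$ formulas, $\Sigma_l$ polarised nested sequents; $^\bullet$ marks input (left) and $^\circ$ output (right) formulas. A polarised context $\Sigma\{\ \}$ is a polarised nested sequent with a hole in place of one formula occurrence (at some node of its tree); $\Sigma\{\Pi\}$ fills the hole with the polarised nested sequent $\Pi$ (its formulas and blocks are added at that node). $\Sigma^\downarrow\{\ \}$ denotes $\Sigma\{\ \}$ with all output formulas removed everywhere. The rules of $\mathsf{NIKm}$ (premisses / conclusion) are: axioms $\Sigma\{\bot^\bullet\}$ and $\Sigma\{p^\bullet,p^\circ\}$; $(\wedge^\bullet)$ $\Sigma\{A^\bullet,B^\bullet\}$ / $\Sigma\{(A\wedge B)^\bullet\}$; $(\wedge^\circ)$ $\Sigma\{A^\circ\}$, $\Sigma\{B^\circ\}$ / $\Sigma\{(A\wedge B)^\circ\}$; $(\vee^\bullet)$ $\Sigma\{A^\bullet\}$, $\Sigma\{B^\bullet\}$ / $\Sigma\{(A\vee B)^\bullet\}$; $(\vee^\circ)$ $\Sigma\{A^\circ,B^\circ\}$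 / $\Sigma\{(A\vee B)^\circ\}$; $(\supset^\bullet)$ $\Sigma\{A^\circ\}$, $\Sigma\{B^\bullet\}$ / $\Sigma\{(A\supset B)^\bullet\}$; $(\supset^\circ)$ $\Sigma^\downarrow\{A^\bullet,B^\circ\}$ / $\Sigma\{(A\supset B)^\circ\}$; $(\Box^\bullet)$ $\Sigma\{[\Delta,A^\bullet]\}$ / $\Sigma\{(\Box A)^\bullet,[\Delta]\}$; $(\Box^\circ)$ $\Sigma^\downarrow\{[A^\circ]\}$ / $\Sigma\{(\Box A)^\circ\}$; $(\Diamond^\bullet)$ $\Sigma\{[A^\bullet]\}$ / $\Sigma\{(\Diamond A)^\bullet\}$; $(\Diamond^\circ)$ $\Sigma\{[\Delta,A^\circ]\}$ / $\Sigma\{(\Diamond A)^\circ,[\Delta]\}$; contractions $\Sigma\{A^\bullet,A^\bullet\}$ / $\Sigma\{A^\bullet\}$ and $\Sigma\{A^\circ,A^\circ\}$ / $\Sigma\{A^\circ\}$. A proof is a finite tree of such rule instances with all leaves axioms. Translation: for a polarised nested sequent $\Sigma=A_1^\bullet,\dots,A_k^\bullet,B_1^\circ,\dots,B_h^\circ,[\Sigma_1],\dots,[\Sigma_n]$, $\mathrm{fl}(\Sigma)$ is the bi-nested sequent $A_1,\dots,A_k\Rightarrow B_1,\dots,B_h,[\mathrm{fl}(\Sigma_1)],\dots,[\mathrm{fl}(\Sigma_n)]$ (containing no implication blocks). Bi-nested sequents: the empty sequent $\Rightarrow$ is one; if $\Gamma,\Delta'$ are finite multisets of formulas and $S_1,\dots,S_m,T_1,\dots,T_n$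 are bi-nested sequents then $\Gamma\Rightarrow\Delta',\langle S_1\rangle,\dots,\langle S_m\rangle,[T_1],\dots,[T_n]$ is one ($\langle S\rangle$ implication block, $[T]$ modal block). A context $G\{\ \}$ is either the hole $\{\ \}$, or $\Gamma\Rightarrow\Delta,\langle G'\{\ \}\rangle$, or $\Gamma\Rightarrow\Delta,[G'\{\ \}]$; $G\{S\}$ fills the hole with $S$. For a consequent $\Delta$, $\Delta^*$ is $\emptyset$ if $\Delta$ has no modal block, and if $\Delta=\Delta_0,[\Lambda_1\Rightarrow\Theta_1],\dots,[\Lambda_k\Rightarrow\Theta_k]$ with $\Delta_0$ free of modal blocks, $\Delta^*=[\Lambda_1\Rightarrow\Theta_1^*],\dots,[\Lambda_k\Rightarrow\Theta_k^*]$. The calculus $\mathbf{C}_{\mathbf{IK}}$ (premisses / conclusion): axioms $G\{\Gamma,\bot\Rightarrow\Delta\}$, $G\{\Gamma\Rightarrow\top,\Delta\}$, $G\{\Gamma,p\Rightarrow\Delta,p\}$ ($p$ atomic); $(\wedge_L)$ $G\{A,B,\Gamma\Rightarrow\Delta\}$ / $G\{A\wedge B,\Gamma\Rightarrow\Delta\}$; $(\wedge_R)$ $G\{\Gamma\Rightarrow\Delta,A\}$, $G\{\Gamma\Rightarrow\Delta,B\}$ / $G\{\Gamma\Rightarrow\Delta,A\wedge B\}$; $(\vee_L)$ $G\{\Gamma,A\Rightarrow\Delta\}$, $G\{\Gamma,B\Rightarrow\Delta\}$ / $G\{\Gamma,A\vee B\Rightarrow\Delta\}$; $(\vee_R)$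 $G\{\Gamma\Rightarrow\Delta,A,B\}$ / $G\{\Gamma\Rightarrow\Delta,A\vee B\}$; $(\supset_L)$ $G\{\Gamma,A\supset B\Rightarrow A,\Delta\}$, $G\{\Gamma,B\Rightarrow\Delta\}$ / $G\{\Gamma,A\supset B\Rightarrow\Delta\}$; $(\supset_R)$ $G\{\Gamma\Rightarrow\Delta,\langle A\Rightarrow B\rangle\}$ / $G\{\Gamma\Rightarrow\Delta,A\supset B\}$; $(\Box_L)$ $G\{\Gamma,\Box A\Rightarrow\Delta,[\Sigma,A\Rightarrow\Pi]\}$ / $G\{\Gamma,\Box A\Rightarrow\Delta,[\Sigma\Rightarrow\Pi]\}$; $(\Box_R)$ $G\{\Gamma\Rightarrow\Delta,\langle\,\Rightarrow[\,\Rightarrow A]\rangle\}$ / $G\{\Gamma\Rightarrow\Delta,\Box A\}$; $(\Diamond_L)$ $G\{\Gamma\Rightarrow\Delta,[A\Rightarrow\,]\}$ / $G\{\Gamma,\Diamond A\Rightarrow\Delta\}$; $(\Diamond_R)$ $G\{\Gamma\Rightarrow\Delta,\Diamond A,[\Sigma\Rightarrow\Pi,A]\}$ / $G\{\Gamma\Rightarrow\Delta,\Diamond A,[\Sigma\Rightarrow\Pi]\}$; (trans) $G\{\Gamma,\Gamma'\Rightarrow\Delta,\langle\Gamma',\Sigma\Rightarrow\Pi\rangle\}$ / $G\{\Gamma,\Gamma'\Rightarrow\Delta,\langle\Sigma\Rightarrow\Pi\rangle\}$; $(\mathrm{inter}_{fc})$ $G\{\Gamma\Rightarrow\Delta,\langle\Sigma\Rightarrow\Pi,[\Lambda\Rightarrow\Theta^*]\rangle,[\Lambda\Rightarrow\Theta]\}$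 / $G\{\Gamma\Rightarrow\Delta,\langle\Sigma\Rightarrow\Pi\rangle,[\Lambda\Rightarrow\Theta]\}$; $(\mathrm{inter}_{bc})$ $G\{\Gamma\Rightarrow\Delta,[\Lambda\Rightarrow\Theta,\langle\Sigma\Rightarrow\Pi\rangle],\langle\,\Rightarrow[\Sigma\Rightarrow\Pi]\rangle\}$ / $G\{\Gamma\Rightarrow\Delta,[\Lambda\Rightarrow\Theta,\langle\Sigma\Rightarrow\Pi\rangle]\}$. A proof of $S$ is a finite tree of sequents built with these rules, with root $S$ and all leaves axioms. *)

theory Defs
  imports Main "HOL-Library.Multiset"
begin

datatype 'a fm =
    At 'a | Bot | Top
  | Conj "'a fm" "'a fm" | Disj "'a fm" "'a fm" | Imp "'a fm" "'a fm"
  | Box "'a fm" | Dia "'a fm"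

text \<open>PSeq I Ou B: input formulas I, output formulas O, blocks B (all multisets).\<close>
datatype 'a pseq = PSeq "'a fm multiset" "'a fm multiset" "'a pseq multiset"

definition pplus :: "'a pseq \<Rightarrow> 'a pseq \<Rightarrow> 'a pseq" where
  "pplus S T = (case S of PSeq I Ou B \<Rightarrow> case T of PSeq I' Ou' B' \<Rightarrow> PSeq (I + I') (Ou + Ou') (B + B'))"

abbreviation pin :: "'a fm multiset \<Rightarrow> 'a pseq" where "pin I \<equiv> PSeq I {#} {#}"
abbreviation pout :: "'a fm multiset \<Rightarrow> 'a pseq" where "pout Ou \<equiv> PSeq {#} Ou {#}"
abbreviation pblk :: "'a pseq \<Rightarrow> 'a pseq" where "pblk S \<equiv> PSeq {#} {#} {#S#}"

text \<open>Polarised contexts are given by the path to the node of the hole: PCBlk I Ou B c is a node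
with inputs I, outputs O, blocks B and one further block containing the context c.
A general context \<Sigma>{ } with the hole at a node is a path context c together with the
remaining contents \<Pi> of the hole's node; \<Sigma>{X} is then pfill c (pplus \<Pi> X).\<close>
datatype 'a pctx = PHole | PCBlk "'a fm multiset" "'a fm multiset" "'a pseq multiset" "'a pctx"

primrec pfill :: "'a pctx \<Rightarrow> 'a pseq \<Rightarrow> 'a pseq" where
  "pfill PHole S = S"
| "pfill (PCBlk I Ou B c) S = PSeq I Ou (B + {# pfill c S #})"

primrec pdown :: "'a pseq \<Rightarrow> 'a pseq" where
  "pdown (PSeq I Ou B) = PSeq I {#} (image_mset pdown B)"

primrec pcdown :: "'a pctx \<Rightarrow> 'a pctx" where
  "pcdown PHole = PHole"
| "pcdown (PCBlk I Ou B c) = PCBlk I {#} (image_mset pdown B) (pcdown c)"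

inductive nikm :: "'a pseq \<Rightarrow> bool" where
  ax_bot: "nikm (pfill c (pplus P (pin {#Bot#})))"
| ax_at: "nikm (pfill c (pplus P (PSeq {#At p#} {#At p#} {#})))"
| conj_in: "nikm (pfill c (pplus P (pin {#A, B#}))) \<Longrightarrow> nikm (pfill c (pplus P (pin {#Conj A B#})))"
| conj_out: "nikm (pfill c (pplus P (pout {#A#}))) \<Longrightarrow> nikm (pfill c (pplus P (pout {#B#})))
      \<Longrightarrow> nikm (pfill c (pplus P (pout {#Conj A B#})))"
| disj_in: "nikm (pfill c (pplus P (pin {#A#}))) \<Longrightarrow> nikm (pfill c (pplus P (pin {#B#})))
      \<Longrightarrow> nikm (pfill c (pplus P (pin {#Disj A B#})))"
| disj_out: "nikm (pfill c (pplus P (pout {#A, B#}))) \<Longrightarrow> nikm (pfill c (pplus P (pout {#Disj A B#})))"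
| imp_in: "nikm (pfill c (pplus P (pout {#A#}))) \<Longrightarrow> nikm (pfill c (pplus P (pin {#B#})))
      \<Longrightarrow> nikm (pfill c (pplus P (pin {#Imp A B#})))"
| imp_out: "nikm (pfill (pcdown c) (pplus (pdown P) (PSeq {#A#} {#B#} {#})))
      \<Longrightarrow> nikm (pfill c (pplus P (pout {#Imp A B#})))"
| box_in: "nikm (pfill c (pplus P (pblk (pplus D (pin {#A#})))))
      \<Longrightarrow> nikm (pfill c (pplus P (PSeq {#Box A#} {#} {#D#})))"
| box_out: "nikm (pfill (pcdown c) (pplus (pdown P) (pblk (pout {#A#}))))
      \<Longrightarrow> nikm (pfill c (pplus P (pout {#Box A#})))"
| dia_in: "nikm (pfill c (pplus P (pblk (pin {#A#})))) \<Longrightarrow> nikm (pfill c (pplus P (pin {#Dia A#})))"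
| dia_out: "nikm (pfill c (pplus P (pblk (pplus D (pout {#A#})))))
      \<Longrightarrow> nikm (pfill c (pplus P (PSeq {#} {#Dia A#} {#D#})))"
| contr_in: "nikm (pfill c (pplus P (pin {#A, A#}))) \<Longrightarrow> nikm (pfill c (pplus P (pin {#A#})))"
| contr_out: "nikm (pfill c (pplus P (pout {#A, A#}))) \<Longrightarrow> nikm (pfill c (pplus P (pout {#A#})))"

text \<open>BSeq G D I M is  G \<Rightarrow> D, <I_1>,...,<I_m>, [M_1],...,[M_n]  (antecedent G, consequent
formulas D, implication blocks I, modal blocks M).\<close>
datatype 'a bseq = BSeq "'a fm multiset" "'a fm multiset" "'a bseq multiset" "'a bseq multiset"

text \<open>Contexts: the hole, or  G \<Rightarrow> D,<G'{ }>  or  G \<Rightarrow> D,[G'{ }]  (D a consequent, here split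
into formulas, implication blocks and modal blocks).\<close>
datatype 'a bctx = BHole
  | BCImp "'a fm multiset" "'a fm multiset" "'a bseq multiset" "'a bseq multiset" "'a bctx"
  | BCMod "'a fm multiset" "'a fm multiset" "'a bseq multiset" "'a bseq multiset" "'a bctx"

primrec bfill :: "'a bctx \<Rightarrow> 'a bseq \<Rightarrow> 'a bseq" where
  "bfill BHole S = S"
| "bfill (BCImp G D I M c) S = BSeq G D (I + {# bfill c S #}) M"
| "bfill (BCMod G D I M c) S = BSeq G D I (M + {# bfill c S #})"

primrec bstar :: "'a bseq \<Rightarrow> 'a bseq" where
  "bstar (BSeq G D I M) = BSeq G {#} {#} (image_mset bstar M)"

inductive cik :: "'a bseq \<Rightarrow> bool" where
  ax_bot: "cik (bfill c (BSeq (G + {#Bot#}) D I M))"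
| ax_top: "cik (bfill c (BSeq G (D + {#Top#}) I M))"
| ax_at: "cik (bfill c (BSeq (G + {#At p#}) (D + {#At p#}) I M))"
| conjL: "cik (bfill c (BSeq (G + {#A, B#}) D I M)) \<Longrightarrow> cik (bfill c (BSeq (G + {#Conj A B#}) D I M))"
| conjR: "cik (bfill c (BSeq G (D + {#A#}) I M)) \<Longrightarrow> cik (bfill c (BSeq G (D + {#B#}) I M))
      \<Longrightarrow> cik (bfill c (BSeq G (D + {#Conj A B#}) I M))"
| disjL: "cik (bfill c (BSeq (G + {#A#}) D I M)) \<Longrightarrow> cik (bfill c (BSeq (G + {#B#}) D I M))
      \<Longrightarrow> cik (bfill c (BSeq (G + {#Disj A B#}) D I M))"
| disjR: "cik (bfill c (BSeq G (D + {#A, B#}) I M)) \<Longrightarrow> cik (bfill c (BSeq G (D + {#Disj A B#}) I M))"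
| impL: "cik (bfill c (BSeq (G + {#Imp A B#}) (D + {#A#}) I M)) \<Longrightarrow> cik (bfill c (BSeq (G + {#B#}) D I M))
      \<Longrightarrow> cik (bfill c (BSeq (G + {#Imp A B#}) D I M))"
| impR: "cik (bfill c (BSeq G D (I + {# BSeq {#A#} {#B#} {#} {#} #}) M))
      \<Longrightarrow> cik (bfill c (BSeq G (D + {#Imp A B#}) I M))"
| boxL: "cik (bfill c (BSeq (G + {#Box A#}) D I (M + {# BSeq (S + {#A#}) P PI PM #})))
      \<Longrightarrow> cik (bfill c (BSeq (G + {#Box A#}) D I (M + {# BSeq S P PI PM #})))"
| boxR: "cik (bfill c (BSeq G D (I + {# BSeq {#} {#} {#} {# BSeq {#} {#A#} {#} {#} #} #}) M))
      \<Longrightarrow> cik (bfill c (BSeq G (D + {#Box A#}) I M))"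
| diaL: "cik (bfill c (BSeq G D I (M + {# BSeq {#A#} {#} {#} {#} #})))
      \<Longrightarrow> cik (bfill c (BSeq (G + {#Dia A#}) D I M))"
| diaR: "cik (bfill c (BSeq G (D + {#Dia A#}) I (M + {# BSeq S (P + {#A#}) PI PM #})))
      \<Longrightarrow> cik (bfill c (BSeq G (D + {#Dia A#}) I (M + {# BSeq S P PI PM #})))"
| trans: "cik (bfill c (BSeq (G + G') D (I + {# BSeq (G' + S) P PI PM #}) M))
      \<Longrightarrow> cik (bfill c (BSeq (G + G') D (I + {# BSeq S P PI PM #}) M))"
| inter_fc: "cik (bfill c (BSeq G D (I + {# BSeq S P PI (PM + {# bstar (BSeq L T TI TM) #}) #})
                                      (M + {# BSeq L T TI TM #})))
      \<Longrightarrow> cik (bfill c (BSeq G D (I + {# BSeq S P PI PM #}) (M + {# BSeq L T TI TM #})))"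
| inter_bc: "cik (bfill c (BSeq G D (I + {# BSeq {#} {#} {#} {# BSeq S P PI PM #} #})
                                   (M + {# BSeq L T (TI + {# BSeq S P PI PM #}) TM #})))
      \<Longrightarrow> cik (bfill c (BSeq G D I (M + {# BSeq L T (TI + {# BSeq S P PI PM #}) TM #})))"

primrec fl :: "'a pseq \<Rightarrow> 'a bseq" where
  "fl (PSeq I Ou B) = BSeq I Ou {#} (image_mset fl B)"

end

theory Submission
  imports Defs
begin

text \<open>
Under fl, every rule of NIKm other than the output rules for implication and box is an instance
of the corresponding rule of C_IK, up to weakening and contraction: C_IK keeps the principal
formula in the premises of impL, boxL and diaR and has no contraction rules. Both are admissible
in C_IK. We show, by induction on derivations and one rule at a time, that derivability is
preserved by a covering relation on bi-nested sequents: hereditary inclusion of the underlying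
sets, up to the decomposition of principal formulas that C_IK rules consume.

The output rules for implication and box erase every output formula of the sequent. In C_IK one
creates the implication block <A => B> (resp. < => [ => A]>) at the node of the hole and moves
it to the root. At every node, trans and inter_fc saturate it with the antecedent and the starred
modal blocks of that node, and inter_bc copies it one level up inside a fresh implication block.
At the root the block has become the flattening of the premise of the NIKm rule, which is
derivable by induction.
\<close>

section \<open>Covering\<close>

primrec ant :: "'a bseq \<Rightarrow> 'a fm multiset" where "ant (BSeq G D I M) = G"
primrec suc :: "'a bseq \<Rightarrow> 'a fm multiset" where "suc (BSeq G D I M) = D"
primrec imps :: "'a bseq \<Rightarrow> 'a bseq multiset" where "imps (BSeq G D I M) = I"
primrec mods :: "'a bseq \<Rightarrow> 'a bseq multiset" where "mods (BSeq G D I M) = M"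

text \<open>
covered S T says that T contains the formulas and blocks of S, hereditarily and regardless of
multiplicities, except that a formula consumed by a C_IK rule may instead be present through its
decomposition, e.g. Conj A B on the left through A and B, or Imp A B on the right through an
implication block with A on the left and B on the right. This keeps a premise covered when the
rule is applied to T after the principal formula of S has been contracted.
\<close>

primrec covered_ant :: "'a fm \<Rightarrow> 'a bseq \<Rightarrow> bool" where
  "covered_ant (At p) n = (At p \<in># ant n)"
| "covered_ant Bot n = (Bot \<in># ant n)"
| "covered_ant Top n = (Top \<in># ant n)"
| "covered_ant (Conj A B) n = (Conj A B \<in># ant n \<or> covered_ant A n \<and> covered_ant B n)"
| "covered_ant (Disj A B) n = (Disj A B \<in># ant n \<or> covered_ant A n \<or> covered_ant B n)"
| "covered_ant (Imp A B) n = (Imp A B \<in># ant n \<or> covered_ant B n)"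
| "covered_ant (Box A) n = (Box A \<in># ant n)"
| "covered_ant (Dia A) n = (Dia A \<in># ant n \<or> (\<exists>b\<in>#mods n. covered_ant A b))"

primrec covered_suc :: "'a fm \<Rightarrow> 'a bseq \<Rightarrow> bool" where
  "covered_suc (At p) n = (At p \<in># suc n)"
| "covered_suc Bot n = (Bot \<in># suc n)"
| "covered_suc Top n = (Top \<in># suc n)"
| "covered_suc (Conj A B) n = (Conj A B \<in># suc n \<or> covered_suc A n \<or> covered_suc B n)"
| "covered_suc (Disj A B) n = (Disj A B \<in># suc n \<or> covered_suc A n \<and> covered_suc B n)"
| "covered_suc (Imp A B) n =
    (Imp A B \<in># suc n \<or> (\<exists>b\<in>#imps n. covered_ant A b \<and> covered_suc B b))"
| "covered_suc (Box A) n =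
    (Box A \<in># suc n \<or> (\<exists>b\<in>#imps n. \<exists>b'\<in>#mods b. covered_suc A b'))"
| "covered_suc (Dia A) n = (Dia A \<in># suc n)"

inductive covered :: "'a bseq \<Rightarrow> 'a bseq \<Rightarrow> bool" where
  "\<lbrakk>\<forall>F\<in>#ant S. covered_ant F T; \<forall>F\<in>#suc S. covered_suc F T;
    \<forall>b\<in>#imps S. \<exists>b'\<in>#imps T. covered b b'; \<forall>b\<in>#mods S. \<exists>b'\<in>#mods T. covered b b'\<rbrakk>
   \<Longrightarrow> covered S T"

lemma covered_iff:
  "covered S T \<longleftrightarrow> (\<forall>F\<in>#ant S. covered_ant F T) \<and> (\<forall>F\<in>#suc S. covered_suc F T) \<and>
    (\<forall>b\<in>#imps S. \<exists>b'\<in>#imps T. covered b b') \<and> (\<forall>b\<in>#mods S. \<exists>b'\<in>#mods T. covered b b')"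
  by (subst covered.simps) auto

lemma covered_ant_mem: "F \<in># ant n \<Longrightarrow> covered_ant F n"
  by (cases F) auto

lemma covered_suc_mem: "F \<in># suc n \<Longrightarrow> covered_suc F n"
  by (cases F) auto

lemma covered_refl: "covered S S"
proof (induction S)
  case (BSeq G D I M)
  then show ?case by (intro covered.intros) (auto intro: covered_ant_mem covered_suc_mem)
qed

lemma covered_ant_of_mem: "F \<in># ant T \<Longrightarrow> covered T U \<Longrightarrow> covered_ant F U"
  by (auto simp: covered_iff[of T U])

lemma covered_suc_of_mem: "F \<in># suc T \<Longrightarrow> covered T U \<Longrightarrow> covered_suc F U"
  by (auto simp: covered_iff[of T U])

lemma covered_ant_trans: "covered_ant F T \<Longrightarrow> covered T U \<Longrightarrow> covered_ant F U"
proof (induction F arbitrary: T U)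
  case (Dia A)
  show ?case
  proof (cases "Dia A \<in># ant T")
    case False
    then obtain b where "b \<in># mods T" "covered_ant A b" using Dia.prems(1) by auto
    moreover obtain b' where "b' \<in># mods U" "covered b b'"
      using Dia.prems(2) calculation(1) by (auto simp: covered_iff[of T U])
    ultimately show ?thesis using Dia.IH by auto
  qed (use Dia.prems covered_ant_of_mem in blast)
next
  case (Conj A B)
  then show ?case using covered_ant_of_mem[of "Conj A B" T U] by auto
next
  case (Disj A B)
  then show ?case using covered_ant_of_mem[of "Disj A B" T U] by auto
next
  case (Imp A B)
  then show ?case using covered_ant_of_mem[of "Imp A B" T U] by auto
qed (use covered_ant_of_mem in force)+

lemma covered_suc_trans: "covered_suc F T \<Longrightarrow> covered T U \<Longrightarrow> covered_suc F U"
proof (induction F arbitrary: T U)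
  case (Imp A B)
  show ?case
  proof (cases "Imp A B \<in># suc T")
    case False
    then obtain b where b: "b \<in># imps T" "covered_ant A b" "covered_suc B b"
      using Imp.prems(1) by auto
    moreover obtain b' where "b' \<in># imps U" "covered b b'"
      using Imp.prems(2) b(1) by (auto simp: covered_iff[of T U])
    ultimately show ?thesis using Imp.IH(2) covered_ant_trans by (meson covered_suc.simps(6))
  qed (use Imp.prems covered_suc_of_mem in blast)
next
  case (Box A)
  show ?case
  proof (cases "Box A \<in># suc T")
    case False
    then obtain b b2 where b: "b \<in># imps T" "b2 \<in># mods b" "covered_suc A b2"
      using Box.prems(1) by auto
    moreover obtain b' where b': "b' \<in># imps U" "covered b b'"
      using Box.prems(2) b(1) by (auto simp: covered_iff[of T U])
    moreover obtain b2' where "b2' \<in># mods b'" "covered b2 b2'"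
      using b(2) b'(2) by (auto simp: covered_iff[of b b'])
    ultimately show ?thesis using Box.IH by auto
  qed (use Box.prems covered_suc_of_mem in blast)
next
  case (Conj A B)
  then show ?case using covered_suc_of_mem[of "Conj A B" T U] by auto
next
  case (Disj A B)
  then show ?case using covered_suc_of_mem[of "Disj A B" T U] by auto
qed (use covered_suc_of_mem in force)+

lemma covered_trans: "covered S T \<Longrightarrow> covered T U \<Longrightarrow> covered S U"
proof (induction arbitrary: U rule: covered.induct)
  case (1 S T)
  have "\<forall>b\<in>#imps T. \<exists>b'\<in>#imps U. covered b b'" "\<forall>b\<in>#mods T. \<exists>b'\<in>#mods U. covered b b'"
    using "1.prems" by (simp_all add: covered_iff[of T U])
  with 1 show ?case
    by (intro covered.intros) (meson covered_ant_trans covered_suc_trans)+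
qed

lemma covered_ant_mono:
  "covered_ant F n \<Longrightarrow> set_mset (ant n) \<subseteq> set_mset (ant n') \<Longrightarrow>
    set_mset (mods n) \<subseteq> set_mset (mods n') \<Longrightarrow> covered_ant F n'"
  by (induction F) auto

lemma covered_suc_mono:
  "covered_suc F n \<Longrightarrow> set_mset (suc n) \<subseteq> set_mset (suc n') \<Longrightarrow>
    set_mset (imps n) \<subseteq> set_mset (imps n') \<Longrightarrow> covered_suc F n'"
  by (induction F) auto

lemma covered_mono:
  assumes "covered S T"
    and "set_mset (ant T) \<subseteq> set_mset (ant T')" "set_mset (suc T) \<subseteq> set_mset (suc T')"
    and "set_mset (imps T) \<subseteq> set_mset (imps T')" "set_mset (mods T) \<subseteq> set_mset (mods T')"
  shows "covered S T'"
  using assms covered_ant_mono covered_suc_mono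
  unfolding covered_iff[of S T] covered_iff[of S T'] by blast

lemma covered_subset:
  "set_mset G \<subseteq> set_mset G' \<Longrightarrow> set_mset D \<subseteq> set_mset D' \<Longrightarrow>
    set_mset I \<subseteq> set_mset I' \<Longrightarrow> set_mset M \<subseteq> set_mset M' \<Longrightarrow>
    covered (BSeq G D I M) (BSeq G' D' I' M')"
  using covered_mono[OF covered_refl, of "BSeq G D I M" "BSeq G' D' I' M'"] by simp

lemma covered_add_ant:
  "covered (BSeq (add_mset F G) D I M) T \<longleftrightarrow> covered (BSeq G D I M) T \<and> covered_ant F T"
  by (auto simp: covered_iff[of "BSeq _ D I M" T])

lemma covered_add_suc:
  "covered (BSeq G (add_mset F D) I M) T \<longleftrightarrow> covered (BSeq G D I M) T \<and> covered_suc F T"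
  by (auto simp: covered_iff[of "BSeq G _ I M" T])

lemma covered_add_imp:
  "covered (BSeq G D (add_mset b I) M) T \<longleftrightarrow>
    covered (BSeq G D I M) T \<and> (\<exists>b'\<in>#imps T. covered b b')"
  by (auto simp: covered_iff[of "BSeq G D _ M" T])

lemma covered_add_mod:
  "covered (BSeq G D I (add_mset b M)) T \<longleftrightarrow>
    covered (BSeq G D I M) T \<and> (\<exists>b'\<in>#mods T. covered b b')"
  by (auto simp: covered_iff[of "BSeq G D I _" T])

lemma covered_replace_imp:
  "covered b b' \<Longrightarrow> covered (BSeq G D (add_mset b I) M) (BSeq G D (add_mset b' I) M)"
  by (auto simp: covered_add_imp intro: covered_subset)

lemma covered_replace_mod:
  "covered b b' \<Longrightarrow> covered (BSeq G D I (add_mset b M)) (BSeq G D I (add_mset b' M))"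
  by (auto simp: covered_add_mod intro: covered_subset)

lemma covered_bfill: "covered X Y \<Longrightarrow> covered (bfill c X) (bfill c Y)"
  by (induction c) (auto intro: covered_replace_imp covered_replace_mod)

lemma covered_bfillE:
  assumes "covered (bfill c X) T"
  obtains c' Y where "T = bfill c' Y" "covered X Y"
    "\<And>X' Y'. covered X' Y' \<Longrightarrow> covered Y Y' \<Longrightarrow> covered (bfill c X') (bfill c' Y')"
  using assms
proof (induction c arbitrary: T thesis)
  case BHole
  then show ?case by (metis bfill.simps(1))
next
  case (BCImp G D I M c)
  obtain G' D' I' M' where T: "T = BSeq G' D' I' M'" by (cases T)
  from BCImp.prems(2) obtain b where b: "b \<in># I'" "covered (bfill c X) b"
    and rest: "covered (BSeq G D I M) T"
    by (auto simp: T covered_add_imp)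
  from BCImp.IH[OF _ b(2)] obtain c' Y where Y: "b = bfill c' Y" "covered X Y"
    and lift: "\<And>X' Y'. covered X' Y' \<Longrightarrow> covered Y Y' \<Longrightarrow> covered (bfill c X') (bfill c' Y')"
    by blast
  obtain I'' where I'': "I' = add_mset b I''" using b(1) by (metis multi_member_split)
  show ?case
  proof (rule BCImp.prems(1))
    show "T = bfill (BCImp G' D' I'' M' c') Y" by (simp add: T I'' Y(1))
    show "covered X Y" by (fact Y(2))
    fix X' Y' assume "covered X' Y'" "covered Y Y'"
    moreover have "covered T (bfill (BCImp G' D' I'' M' c') Y')"
      using covered_replace_imp[OF covered_bfill[OF \<open>covered Y Y'\<close>]] by (simp add: T I'' Y(1))
    ultimately show "covered (bfill (BCImp G D I M c) X') (bfill (BCImp G' D' I'' M' c') Y')"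
      using covered_trans[OF rest] lift by (simp add: covered_add_imp)
  qed
next
  case (BCMod G D I M c)
  obtain G' D' I' M' where T: "T = BSeq G' D' I' M'" by (cases T)
  from BCMod.prems(2) obtain b where b: "b \<in># M'" "covered (bfill c X) b"
    and rest: "covered (BSeq G D I M) T"
    by (auto simp: T covered_add_mod)
  from BCMod.IH[OF _ b(2)] obtain c' Y where Y: "b = bfill c' Y" "covered X Y"
    and lift: "\<And>X' Y'. covered X' Y' \<Longrightarrow> covered Y Y' \<Longrightarrow> covered (bfill c X') (bfill c' Y')"
    by blast
  obtain M'' where M'': "M' = add_mset b M''" using b(1) by (metis multi_member_split)
  show ?case
  proof (rule BCMod.prems(1))
    show "T = bfill (BCMod G' D' I' M'' c') Y" by (simp add: T M'' Y(1))
    show "covered X Y" by (fact Y(2))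
    fix X' Y' assume "covered X' Y'" "covered Y Y'"
    moreover have "covered T (bfill (BCMod G' D' I' M'' c') Y')"
      using covered_replace_mod[OF covered_bfill[OF \<open>covered Y Y'\<close>]] by (simp add: T M'' Y(1))
    ultimately show "covered (bfill (BCMod G D I M c) X') (bfill (BCMod G' D' I' M'' c') Y')"
      using covered_trans[OF rest] lift by (simp add: covered_add_mod)
  qed
qed

lemma ant_bstar [simp]: "ant (bstar n) = ant n"
  and suc_bstar [simp]: "suc (bstar n) = {#}"
  and imps_bstar [simp]: "imps (bstar n) = {#}"
  and mods_bstar [simp]: "mods (bstar n) = image_mset bstar (mods n)"
  by (cases n; simp)+

lemma covered_ant_bstar: "covered_ant F n \<Longrightarrow> covered_ant F (bstar n)"
  by (induction F arbitrary: n) auto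

lemma covered_ant_saturated:
  "covered_ant F n \<Longrightarrow> set_mset (ant n) \<subseteq> set_mset (ant n') \<Longrightarrow>
    \<forall>b\<in>#mods n. bstar b \<in># mods n' \<Longrightarrow> covered_ant F n'"
  by (induction F) (auto intro: covered_ant_bstar)

lemma covered_bstar: "covered S T \<Longrightarrow> covered (bstar S) (bstar T)"
proof (induction rule: covered.induct)
  case (1 S T)
  then show ?case
    by (intro covered.intros) (auto intro: covered_ant_bstar)
qed

primrec bcomp :: "'a bctx \<Rightarrow> 'a bctx \<Rightarrow> 'a bctx" where
  "bcomp BHole d = d"
| "bcomp (BCImp G D I M c) d = BCImp G D I M (bcomp c d)"
| "bcomp (BCMod G D I M c) d = BCMod G D I M (bcomp c d)"

lemma bfill_bcomp: "bfill (bcomp c d) S = bfill c (bfill d S)"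
  by (induction c) auto

lemma cik_bfill: "cik X \<Longrightarrow> cik (bfill e X)"
  by (induction rule: cik.induct)
    (simp only: bfill_bcomp[symmetric], (rule cik.intros; assumption))+

lemma cik_inter_fc_all:
  assumes "Ms \<subseteq># M"
    and "cik (bfill e (BSeq G D (add_mset (BSeq S P PI (PM + image_mset bstar Ms)) I) M))"
  shows "cik (bfill e (BSeq G D (add_mset (BSeq S P PI PM) I) M))"
  using assms
proof (induction Ms arbitrary: PM)
  case (add b Ms)
  obtain L T TI TM where b: "b = BSeq L T TI TM" by (cases b)
  have "b \<in># M" "Ms \<subseteq># M"
    using add.prems(1) by (auto dest: mset_subset_eq_insertD)
  then obtain M' where M: "M = add_mset b M'" by (metis multi_member_split)
  have "cik (bfill e (BSeq G D (add_mset (BSeq S P PI (add_mset (bstar b) PM)) I) M))"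
    using add.IH[OF \<open>Ms \<subseteq># M\<close>] add.prems(2) by simp
  then show ?case
    using cik.inter_fc[where c=e and I=I and PM=PM and M=M'] by (simp add: M b)
qed simp

lemma cik_saturate:
  assumes "Ms \<subseteq># M"
    and "cik (bfill e (BSeq G D (add_mset (BSeq (G + S) P PI (PM + image_mset bstar Ms)) I) M))"
  shows "cik (bfill e (BSeq G D (add_mset (BSeq S P PI PM) I) M))"
proof -
  have "cik (bfill e (BSeq G D (add_mset (BSeq (G + S) P PI PM) I) M))"
    by (rule cik_inter_fc_all[OF assms])
  then show ?thesis
    using cik.trans[where c=e and G="{#}" and G'=G and I=I and S=S and PM=PM] by simp
qed

section \<open>Admissibility of weakening and contraction\<close>

text \<open>
In each of the following lemmas, either the principal formula of the rule occurs in Y and the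
rule is applied to Y, or Y contains it only decomposed and then already covers a premise.
\<close>

lemma cik_ax_bot_covered:
  assumes "covered (BSeq (G + {#Bot#}) D I M) Y"
  shows "cik (bfill c Y)"
proof -
  obtain Ga Da Ia Ma where Y: "Y = BSeq Ga Da Ia Ma" by (cases Y)
  have "Bot \<in># Ga" using assms by (simp add: Y covered_add_ant)
  then obtain G' where "Ga = add_mset Bot G'" by (metis multi_member_split)
  then show ?thesis using cik.ax_bot[where c=c and G=G' and D=Da and I=Ia and M=Ma] by (simp add: Y)
qed

lemma cik_ax_top_covered:
  assumes "covered (BSeq G (D + {#Top#}) I M) Y"
  shows "cik (bfill c Y)"
proof -
  obtain Ga Da Ia Ma where Y: "Y = BSeq Ga Da Ia Ma" by (cases Y)
  have "Top \<in># Da" using assms by (simp add: Y covered_add_suc)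
  then obtain D' where "Da = add_mset Top D'" by (metis multi_member_split)
  then show ?thesis using cik.ax_top[where c=c and G=Ga and D=D' and I=Ia and M=Ma] by (simp add: Y)
qed

lemma cik_ax_at_covered:
  assumes "covered (BSeq (G + {#At p#}) (D + {#At p#}) I M) Y"
  shows "cik (bfill c Y)"
proof -
  obtain Ga Da Ia Ma where Y: "Y = BSeq Ga Da Ia Ma" by (cases Y)
  have "At p \<in># Ga" "At p \<in># Da" using assms by (simp_all add: Y covered_add_ant covered_add_suc)
  then obtain G' D' where "Ga = add_mset (At p) G'" "Da = add_mset (At p) D'"
    by (metis multi_member_split)
  then show ?thesis
    using cik.ax_at[where c=c and G=G' and D=D' and I=Ia and M=Ma and p=p] by (simp add: Y)
qed

lemma cik_conjL_covered:
  assumes "covered (BSeq (G + {#Conj A B#}) D I M) Y"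
    and "\<And>Y'. covered Y Y' \<Longrightarrow> covered (BSeq (G + {#A, B#}) D I M) Y' \<Longrightarrow> cik (bfill c Y')"
  shows "cik (bfill c Y)"
proof -
  obtain Ga Da Ia Ma where Y: "Y = BSeq Ga Da Ia Ma" by (cases Y)
  have rest: "covered (BSeq G D I M) Y" and cov: "covered_ant (Conj A B) Y"
    using assms(1) by (simp_all add: covered_add_ant)
  show ?thesis
  proof (cases "Conj A B \<in># Ga")
    case True
    then obtain G' where G': "Ga = add_mset (Conj A B) G'" by (metis multi_member_split)
    let ?Y' = "BSeq (add_mset A (add_mset B G')) Da Ia Ma"
    have "covered Y ?Y'"
      unfolding Y G' covered_add_ant by (auto intro: covered_subset covered_ant_mem)
    moreover from covered_trans[OF rest this]
    have "covered (BSeq (G + {#A, B#}) D I M) ?Y'" by (simp add: covered_add_ant covered_ant_mem)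
    ultimately have "cik (bfill c ?Y')" by (rule assms(2))
    then show ?thesis using cik.conjL[where c=c and G=G' and D=Da and I=Ia and M=Ma] by (simp add: Y G')
  next
    case False
    with cov rest have "covered (BSeq (G + {#A, B#}) D I M) Y" by (simp add: Y covered_add_ant)
    then show ?thesis using assms(2) covered_refl by blast
  qed
qed

lemma cik_conjR_covered:
  assumes "covered (BSeq G (D + {#Conj A B#}) I M) Y"
    and "\<And>Y'. covered Y Y' \<Longrightarrow> covered (BSeq G (D + {#A#}) I M) Y' \<Longrightarrow> cik (bfill c Y')"
    and "\<And>Y'. covered Y Y' \<Longrightarrow> covered (BSeq G (D + {#B#}) I M) Y' \<Longrightarrow> cik (bfill c Y')"
  shows "cik (bfill c Y)"
proof -
  obtain Ga Da Ia Ma where Y: "Y = BSeq Ga Da Ia Ma" by (cases Y)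
  have rest: "covered (BSeq G D I M) Y" and cov: "covered_suc (Conj A B) Y"
    using assms(1) by (simp_all add: covered_add_suc)
  show ?thesis
  proof (cases "Conj A B \<in># Da")
    case True
    then obtain D' where D': "Da = add_mset (Conj A B) D'" by (metis multi_member_split)
    let ?YA = "BSeq Ga (add_mset A D') Ia Ma" and ?YB = "BSeq Ga (add_mset B D') Ia Ma"
    have "covered Y ?YA" "covered Y ?YB"
      unfolding Y D' covered_add_suc by (auto intro: covered_subset covered_suc_mem)
    moreover from this have "covered (BSeq G (D + {#A#}) I M) ?YA" "covered (BSeq G (D + {#B#}) I M) ?YB"
      using covered_trans[OF rest] by (simp_all add: covered_add_suc covered_suc_mem)
    ultimately have "cik (bfill c ?YA)" "cik (bfill c ?YB)" using assms(2,3) by blast+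
    then show ?thesis using cik.conjR[where c=c and G=Ga and D=D' and I=Ia and M=Ma] by (simp add: Y D')
  next
    case False
    with cov have "covered_suc A Y \<or> covered_suc B Y" by (simp add: Y)
    with rest show ?thesis using assms(2,3) covered_refl by (auto simp: covered_add_suc)
  qed
qed

lemma cik_disjL_covered:
  assumes "covered (BSeq (G + {#Disj A B#}) D I M) Y"
    and "\<And>Y'. covered Y Y' \<Longrightarrow> covered (BSeq (G + {#A#}) D I M) Y' \<Longrightarrow> cik (bfill c Y')"
    and "\<And>Y'. covered Y Y' \<Longrightarrow> covered (BSeq (G + {#B#}) D I M) Y' \<Longrightarrow> cik (bfill c Y')"
  shows "cik (bfill c Y)"
proof -
  obtain Ga Da Ia Ma where Y: "Y = BSeq Ga Da Ia Ma" by (cases Y)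
  have rest: "covered (BSeq G D I M) Y" and cov: "covered_ant (Disj A B) Y"
    using assms(1) by (simp_all add: covered_add_ant)
  show ?thesis
  proof (cases "Disj A B \<in># Ga")
    case True
    then obtain G' where G': "Ga = add_mset (Disj A B) G'" by (metis multi_member_split)
    let ?YA = "BSeq (add_mset A G') Da Ia Ma" and ?YB = "BSeq (add_mset B G') Da Ia Ma"
    have "covered Y ?YA" "covered Y ?YB"
      unfolding Y G' covered_add_ant by (auto intro: covered_subset covered_ant_mem)
    moreover from this have "covered (BSeq (G + {#A#}) D I M) ?YA" "covered (BSeq (G + {#B#}) D I M) ?YB"
      using covered_trans[OF rest] by (simp_all add: covered_add_ant covered_ant_mem)
    ultimately have "cik (bfill c ?YA)" "cik (bfill c ?YB)" using assms(2,3) by blast+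
    then show ?thesis using cik.disjL[where c=c and G=G' and D=Da and I=Ia and M=Ma] by (simp add: Y G')
  next
    case False
    with cov have "covered_ant A Y \<or> covered_ant B Y" by (simp add: Y)
    with rest show ?thesis using assms(2,3) covered_refl by (auto simp: covered_add_ant)
  qed
qed

lemma cik_disjR_covered:
  assumes "covered (BSeq G (D + {#Disj A B#}) I M) Y"
    and "\<And>Y'. covered Y Y' \<Longrightarrow> covered (BSeq G (D + {#A, B#}) I M) Y' \<Longrightarrow> cik (bfill c Y')"
  shows "cik (bfill c Y)"
proof -
  obtain Ga Da Ia Ma where Y: "Y = BSeq Ga Da Ia Ma" by (cases Y)
  have rest: "covered (BSeq G D I M) Y" and cov: "covered_suc (Disj A B) Y"
    using assms(1) by (simp_all add: covered_add_suc)
  show ?thesis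
  proof (cases "Disj A B \<in># Da")
    case True
    then obtain D' where D': "Da = add_mset (Disj A B) D'" by (metis multi_member_split)
    let ?Y' = "BSeq Ga (add_mset A (add_mset B D')) Ia Ma"
    have "covered Y ?Y'"
      unfolding Y D' covered_add_suc by (auto intro: covered_subset covered_suc_mem)
    moreover from covered_trans[OF rest this]
    have "covered (BSeq G (D + {#A, B#}) I M) ?Y'" by (simp add: covered_add_suc covered_suc_mem)
    ultimately have "cik (bfill c ?Y')" by (rule assms(2))
    then show ?thesis using cik.disjR[where c=c and G=Ga and D=D' and I=Ia and M=Ma] by (simp add: Y D')
  next
    case False
    with cov rest have "covered (BSeq G (D + {#A, B#}) I M) Y" by (simp add: Y covered_add_suc)
    then show ?thesis using assms(2) covered_refl by blast
  qed
qed

lemma cik_impL_covered: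
  assumes "covered (BSeq (G + {#Imp A B#}) D I M) Y"
    and "\<And>Y'. covered Y Y' \<Longrightarrow> covered (BSeq (G + {#Imp A B#}) (D + {#A#}) I M) Y' \<Longrightarrow> cik (bfill c Y')"
    and "\<And>Y'. covered Y Y' \<Longrightarrow> covered (BSeq (G + {#B#}) D I M) Y' \<Longrightarrow> cik (bfill c Y')"
  shows "cik (bfill c Y)"
proof -
  obtain Ga Da Ia Ma where Y: "Y = BSeq Ga Da Ia Ma" by (cases Y)
  have rest: "covered (BSeq G D I M) Y" and cov: "covered_ant (Imp A B) Y"
    using assms(1) by (simp_all add: covered_add_ant)
  show ?thesis
  proof (cases "Imp A B \<in># Ga")
    case True
    then obtain G' where G': "Ga = add_mset (Imp A B) G'" by (metis multi_member_split)
    let ?YA = "BSeq Ga (add_mset A Da) Ia Ma" and ?YB = "BSeq (add_mset B G') Da Ia Ma"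
    have "covered Y ?YA" unfolding Y by (rule covered_subset) auto
    moreover from covered_trans[OF assms(1) this]
    have "covered (BSeq (G + {#Imp A B#}) (D + {#A#}) I M) ?YA" by (simp add: covered_add_suc covered_suc_mem)
    ultimately have "cik (bfill c ?YA)" by (rule assms(2))
    have "covered Y ?YB" unfolding Y G' covered_add_ant by (auto intro: covered_subset covered_ant_mem)
    moreover from covered_trans[OF rest this]
    have "covered (BSeq (G + {#B#}) D I M) ?YB" by (simp add: covered_add_ant covered_ant_mem)
    ultimately have "cik (bfill c ?YB)" by (rule assms(3))
    with \<open>cik (bfill c ?YA)\<close> show ?thesis
      using cik.impL[where c=c and G=G' and D=Da and I=Ia and M=Ma] by (simp add: Y G')
  next
    case False
    with cov rest have "covered (BSeq (G + {#B#}) D I M) Y" by (simp add: Y covered_add_ant)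
    then show ?thesis using assms(3) covered_refl by blast
  qed
qed

lemma cik_impR_covered:
  assumes "covered (BSeq G (D + {#Imp A B#}) I M) Y"
    and "\<And>Y'. covered Y Y' \<Longrightarrow> covered (BSeq G D (I + {#BSeq {#A#} {#B#} {#} {#}#}) M) Y'
      \<Longrightarrow> cik (bfill c Y')"
  shows "cik (bfill c Y)"
proof -
  obtain Ga Da Ia Ma where Y: "Y = BSeq Ga Da Ia Ma" by (cases Y)
  have rest: "covered (BSeq G D I M) Y" and cov: "covered_suc (Imp A B) Y"
    using assms(1) by (simp_all add: covered_add_suc)
  let ?K = "BSeq {#A#} {#B#} {#} {#} :: 'a bseq"
  show ?thesis
  proof (cases "Imp A B \<in># Da")
    case True
    then obtain D' where D': "Da = add_mset (Imp A B) D'" by (metis multi_member_split)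
    let ?Y' = "BSeq Ga D' (add_mset ?K Ia) Ma"
    have "covered_suc (Imp A B) ?Y'" by (simp add: covered_ant_mem covered_suc_mem)
    then have "covered Y ?Y'" unfolding Y D' covered_add_suc by (auto intro: covered_subset)
    moreover from covered_trans[OF rest this]
    have "covered (BSeq G D (I + {#?K#}) M) ?Y'" using covered_refl by (auto simp: covered_add_imp)
    ultimately have "cik (bfill c ?Y')" by (rule assms(2))
    then show ?thesis using cik.impR[where c=c and G=Ga and D=D' and I=Ia and M=Ma] by (simp add: Y D')
  next
    case False
    with cov obtain b where b: "b \<in># Ia" "covered_ant A b" "covered_suc B b" by (auto simp: Y)
    then have "covered ?K b" by (simp add: covered_iff[of ?K b])
    with rest b(1) have "covered (BSeq G D (I + {#?K#}) M) Y" by (auto simp: Y covered_add_imp)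
    then show ?thesis using assms(2) covered_refl by blast
  qed
qed

lemma cik_boxL_covered:
  assumes "covered (BSeq (G + {#Box A#}) D I (M + {#BSeq S P PI PM#})) Y"
    and "\<And>Y'. covered Y Y' \<Longrightarrow>
      covered (BSeq (G + {#Box A#}) D I (M + {#BSeq (S + {#A#}) P PI PM#})) Y' \<Longrightarrow> cik (bfill c Y')"
  shows "cik (bfill c Y)"
proof -
  obtain Ga Da Ia Ma where Y: "Y = BSeq Ga Da Ia Ma" by (cases Y)
  have rest: "covered (BSeq (add_mset (Box A) G) D I M) Y"
    and "\<exists>b\<in>#Ma. covered (BSeq S P PI PM) b"
    using assms(1) by (simp_all add: Y covered_add_mod)
  then obtain b where b: "b \<in># Ma" "covered (BSeq S P PI PM) b" by blast
  obtain M' where M': "Ma = add_mset b M'" using b(1) by (metis multi_member_split)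
  obtain S' P' PI' PM' where b_eq: "b = BSeq S' P' PI' PM'" by (cases b)
  have "Box A \<in># Ga" using rest by (simp add: Y covered_add_ant)
  then obtain G' where G': "Ga = add_mset (Box A) G'" by (metis multi_member_split)
  let ?b' = "BSeq (add_mset A S') P' PI' PM'"
  let ?Y' = "BSeq Ga Da Ia (add_mset ?b' M')"
  have "covered b ?b'" unfolding b_eq by (rule covered_subset) auto
  then have "covered Y ?Y'" unfolding Y M' by (rule covered_replace_mod)
  moreover have "covered (BSeq (add_mset A S) P PI PM) ?b'"
    using covered_trans[OF b(2) \<open>covered b ?b'\<close>] by (simp add: covered_add_ant covered_ant_mem)
  with covered_trans[OF rest \<open>covered Y ?Y'\<close>]
  have "covered (BSeq (G + {#Box A#}) D I (M + {#BSeq (S + {#A#}) P PI PM#})) ?Y'"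
    by (simp add: covered_add_mod)
  ultimately have "cik (bfill c ?Y')" by (rule assms(2))
  then show ?thesis
    using cik.boxL[where c=c and G=G' and D=Da and I=Ia and M=M' and S=S' and P=P' and PI=PI' and PM=PM']
    by (simp add: Y G' M' b_eq)
qed

lemma cik_boxR_covered:
  assumes "covered (BSeq G (D + {#Box A#}) I M) Y"
    and "\<And>Y'. covered Y Y' \<Longrightarrow>
      covered (BSeq G D (I + {#BSeq {#} {#} {#} {#BSeq {#} {#A#} {#} {#}#}#}) M) Y' \<Longrightarrow> cik (bfill c Y')"
  shows "cik (bfill c Y)"
proof -
  obtain Ga Da Ia Ma where Y: "Y = BSeq Ga Da Ia Ma" by (cases Y)
  have rest: "covered (BSeq G D I M) Y" and cov: "covered_suc (Box A) Y"
    using assms(1) by (simp_all add: covered_add_suc)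
  let ?K = "BSeq {#} {#A#} {#} {#} :: 'a bseq"
  let ?L = "BSeq {#} {#} {#} {#?K#} :: 'a bseq"
  show ?thesis
  proof (cases "Box A \<in># Da")
    case True
    then obtain D' where D': "Da = add_mset (Box A) D'" by (metis multi_member_split)
    let ?Y' = "BSeq Ga D' (add_mset ?L Ia) Ma"
    have "covered_suc (Box A) ?Y'" by (simp add: covered_suc_mem)
    then have "covered Y ?Y'" unfolding Y D' covered_add_suc by (auto intro: covered_subset)
    moreover from covered_trans[OF rest this]
    have "covered (BSeq G D (I + {#?L#}) M) ?Y'" using covered_refl by (auto simp: covered_add_imp)
    ultimately have "cik (bfill c ?Y')" by (rule assms(2))
    then show ?thesis using cik.boxR[where c=c and G=Ga and D=D' and I=Ia and M=Ma] by (simp add: Y D')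
  next
    case False
    with cov obtain b b' where b: "b \<in># Ia" "b' \<in># mods b" "covered_suc A b'" by (auto simp: Y)
    then have "covered ?K b'" by (simp add: covered_iff[of ?K b'])
    with b(2) have "covered ?L b" by (auto simp: covered_iff[of ?L b])
    with rest b(1) have "covered (BSeq G D (I + {#?L#}) M) Y" by (auto simp: Y covered_add_imp)
    then show ?thesis using assms(2) covered_refl by blast
  qed
qed

lemma cik_diaL_covered:
  assumes "covered (BSeq (G + {#Dia A#}) D I M) Y"
    and "\<And>Y'. covered Y Y' \<Longrightarrow> covered (BSeq G D I (M + {#BSeq {#A#} {#} {#} {#}#})) Y'
      \<Longrightarrow> cik (bfill c Y')"
  shows "cik (bfill c Y)"
proof -
  obtain Ga Da Ia Ma where Y: "Y = BSeq Ga Da Ia Ma" by (cases Y)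
  have rest: "covered (BSeq G D I M) Y" and cov: "covered_ant (Dia A) Y"
    using assms(1) by (simp_all add: covered_add_ant)
  let ?K = "BSeq {#A#} {#} {#} {#} :: 'a bseq"
  show ?thesis
  proof (cases "Dia A \<in># Ga")
    case True
    then obtain G' where G': "Ga = add_mset (Dia A) G'" by (metis multi_member_split)
    let ?Y' = "BSeq G' Da Ia (add_mset ?K Ma)"
    have "covered_ant (Dia A) ?Y'" by (simp add: covered_ant_mem)
    then have "covered Y ?Y'" unfolding Y G' covered_add_ant by (auto intro: covered_subset)
    moreover from covered_trans[OF rest this]
    have "covered (BSeq G D I (M + {#?K#})) ?Y'" using covered_refl by (auto simp: covered_add_mod)
    ultimately have "cik (bfill c ?Y')" by (rule assms(2))
    then show ?thesis using cik.diaL[where c=c and G=G' and D=Da and I=Ia and M=Ma] by (simp add: Y G')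
  next
    case False
    with cov obtain b where b: "b \<in># Ma" "covered_ant A b" by (auto simp: Y)
    then have "covered ?K b" by (simp add: covered_iff[of ?K b])
    with rest b(1) have "covered (BSeq G D I (M + {#?K#})) Y" by (auto simp: Y covered_add_mod)
    then show ?thesis using assms(2) covered_refl by blast
  qed
qed

lemma cik_diaR_covered:
  assumes "covered (BSeq G (D + {#Dia A#}) I (M + {#BSeq S P PI PM#})) Y"
    and "\<And>Y'. covered Y Y' \<Longrightarrow>
      covered (BSeq G (D + {#Dia A#}) I (M + {#BSeq S (P + {#A#}) PI PM#})) Y' \<Longrightarrow> cik (bfill c Y')"
  shows "cik (bfill c Y)"
proof -
  obtain Ga Da Ia Ma where Y: "Y = BSeq Ga Da Ia Ma" by (cases Y)
  have rest: "covered (BSeq G (add_mset (Dia A) D) I M) Y"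
    and "\<exists>b\<in>#Ma. covered (BSeq S P PI PM) b"
    using assms(1) by (simp_all add: Y covered_add_mod)
  then obtain b where b: "b \<in># Ma" "covered (BSeq S P PI PM) b" by blast
  obtain M' where M': "Ma = add_mset b M'" using b(1) by (metis multi_member_split)
  obtain S' P' PI' PM' where b_eq: "b = BSeq S' P' PI' PM'" by (cases b)
  have "Dia A \<in># Da" using rest by (simp add: Y covered_add_suc)
  then obtain D' where D': "Da = add_mset (Dia A) D'" by (metis multi_member_split)
  let ?b' = "BSeq S' (add_mset A P') PI' PM'"
  let ?Y' = "BSeq Ga Da Ia (add_mset ?b' M')"
  have "covered b ?b'" unfolding b_eq by (rule covered_subset) auto
  then have "covered Y ?Y'" unfolding Y M' by (rule covered_replace_mod)
  moreover have "covered (BSeq S (add_mset A P) PI PM) ?b'"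
    using covered_trans[OF b(2) \<open>covered b ?b'\<close>] by (simp add: covered_add_suc covered_suc_mem)
  with covered_trans[OF rest \<open>covered Y ?Y'\<close>]
  have "covered (BSeq G (D + {#Dia A#}) I (M + {#BSeq S (P + {#A#}) PI PM#})) ?Y'"
    by (simp add: covered_add_mod)
  ultimately have "cik (bfill c ?Y')" by (rule assms(2))
  then show ?thesis
    using cik.diaR[where c=c and D=D' and I=Ia and M=M' and S=S' and P=P' and PI=PI' and PM=PM']
    by (simp add: Y D' M' b_eq)
qed

lemma cik_trans_covered:
  assumes "covered (BSeq (G + G') D (I + {#BSeq S P PI PM#}) M) Y"
    and "\<And>Y'. covered Y Y' \<Longrightarrow>
      covered (BSeq (G + G') D (I + {#BSeq (G' + S) P PI PM#}) M) Y' \<Longrightarrow> cik (bfill c Y')"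
  shows "cik (bfill c Y)"
proof -
  obtain Ga Da Ia Ma where Y: "Y = BSeq Ga Da Ia Ma" by (cases Y)
  have rest: "covered (BSeq (G + G') D I M) Y" and "\<exists>b\<in>#Ia. covered (BSeq S P PI PM) b"
    using assms(1) by (simp_all add: Y covered_add_imp)
  then obtain b where b: "b \<in># Ia" "covered (BSeq S P PI PM) b" by blast
  obtain I' where I': "Ia = add_mset b I'" using b(1) by (metis multi_member_split)
  obtain S' P' PI' PM' where b_eq: "b = BSeq S' P' PI' PM'" by (cases b)
  let ?b' = "BSeq (Ga + S') P' PI' (PM' + image_mset bstar Ma)"
  let ?Y' = "BSeq Ga Da (add_mset ?b' I') Ma"
  have "covered b ?b'" unfolding b_eq by (rule covered_subset) auto
  then have "covered Y ?Y'" unfolding Y I' by (rule covered_replace_imp)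
  moreover have "covered (BSeq (G' + S) P PI PM) ?b'"
  proof -
    have "covered_ant F ?b'" if "F \<in># G'" for F
    proof (rule covered_ant_saturated)
      show "covered_ant F Y" using rest that by (auto simp: covered_iff[of _ Y])
    qed (auto simp: Y)
    then show ?thesis
      using covered_trans[OF b(2) \<open>covered b ?b'\<close>] by (auto simp: covered_iff[of _ ?b'])
  qed
  with covered_trans[OF rest \<open>covered Y ?Y'\<close>]
  have "covered (BSeq (G + G') D (I + {#BSeq (G' + S) P PI PM#}) M) ?Y'"
    by (simp add: covered_add_imp)
  ultimately have "cik (bfill c ?Y')" by (rule assms(2))
  then show ?thesis
    using cik_saturate[where Ms=Ma and M=Ma and e=c and G=Ga and I=I' and S=S' and PM=PM']
    by (simp add: Y I' b_eq)
qed

lemma cik_inter_fc_covered: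
  assumes "covered (BSeq G D (I + {#BSeq S P PI PM#}) (M + {#BSeq L T TI TM#})) Y"
    and "\<And>Y'. covered Y Y' \<Longrightarrow>
      covered (BSeq G D (I + {#BSeq S P PI (PM + {#bstar (BSeq L T TI TM)#})#})
        (M + {#BSeq L T TI TM#})) Y' \<Longrightarrow> cik (bfill c Y')"
  shows "cik (bfill c Y)"
proof -
  obtain Ga Da Ia Ma where Y: "Y = BSeq Ga Da Ia Ma" by (cases Y)
  have rest: "covered (BSeq G D I M) Y"
    and "\<exists>b\<in>#Ia. covered (BSeq S P PI PM) b" and "\<exists>m\<in>#Ma. covered (BSeq L T TI TM) m"
    using assms(1) by (simp_all add: Y covered_add_imp covered_add_mod)
  then obtain b m where b: "b \<in># Ia" "covered (BSeq S P PI PM) b"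
    and m: "m \<in># Ma" "covered (BSeq L T TI TM) m" by blast
  obtain I' where I': "Ia = add_mset b I'" using b(1) by (metis multi_member_split)
  obtain M' where M': "Ma = add_mset m M'" using m(1) by (metis multi_member_split)
  obtain S' P' PI' PM' where b_eq: "b = BSeq S' P' PI' PM'" by (cases b)
  obtain L' T' TI' TM' where m_eq: "m = BSeq L' T' TI' TM'" by (cases m)
  let ?b' = "BSeq S' P' PI' (add_mset (bstar m) PM')"
  let ?Y' = "BSeq Ga Da (add_mset ?b' I') Ma"
  have "covered b ?b'" unfolding b_eq by (rule covered_subset) auto
  then have "covered Y ?Y'" unfolding Y I' by (rule covered_replace_imp)
  moreover have "covered (BSeq S P PI (add_mset (bstar (BSeq L T TI TM)) PM)) ?b'"
    using covered_trans[OF b(2) \<open>covered b ?b'\<close>] covered_bstar[OF m(2)]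
    by (auto simp: covered_add_mod)
  with covered_trans[OF rest \<open>covered Y ?Y'\<close>] m
  have "covered (BSeq G D (I + {#BSeq S P PI (PM + {#bstar (BSeq L T TI TM)#})#})
      (M + {#BSeq L T TI TM#})) ?Y'"
    by (auto simp: covered_add_imp covered_add_mod Y)
  ultimately have "cik (bfill c ?Y')" by (rule assms(2))
  then show ?thesis
    using cik.inter_fc[where c=c and I=I' and S=S' and P=P' and PI=PI' and PM=PM'
        and L=L' and T=T' and TI=TI' and TM=TM' and M=M']
    by (simp add: Y I' M' b_eq m_eq)
qed

lemma cik_inter_bc_covered:
  assumes "covered (BSeq G D I (M + {#BSeq L T (TI + {#BSeq S P PI PM#}) TM#})) Y"
    and "\<And>Y'. covered Y Y' \<Longrightarrow>
      covered (BSeq G D (I + {#BSeq {#} {#} {#} {#BSeq S P PI PM#}#})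
        (M + {#BSeq L T (TI + {#BSeq S P PI PM#}) TM#})) Y' \<Longrightarrow> cik (bfill c Y')"
  shows "cik (bfill c Y)"
proof -
  obtain Ga Da Ia Ma where Y: "Y = BSeq Ga Da Ia Ma" by (cases Y)
  have "\<exists>m\<in>#Ma. covered (BSeq L T (add_mset (BSeq S P PI PM) TI) TM) m"
    using assms(1) by (simp add: Y covered_add_mod)
  then obtain m where m: "m \<in># Ma" "covered (BSeq L T (add_mset (BSeq S P PI PM) TI) TM) m" by blast
  obtain M' where M': "Ma = add_mset m M'" using m(1) by (metis multi_member_split)
  obtain L' T' TI' TM' where m_eq: "m = BSeq L' T' TI' TM'" by (cases m)
  obtain k where k: "k \<in># TI'" "covered (BSeq S P PI PM) k"
    using m(2) by (auto simp: m_eq covered_add_imp)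
  obtain TI'' where TI'': "TI' = add_mset k TI''" using k(1) by (metis multi_member_split)
  obtain S' P' PI' PM' where k_eq: "k = BSeq S' P' PI' PM'" by (cases k)
  let ?K = "BSeq {#} {#} {#} {#BSeq S P PI PM#} :: 'a bseq"
  let ?Y' = "BSeq Ga Da (add_mset (BSeq {#} {#} {#} {#k#}) Ia) Ma"
  have "covered Y ?Y'" unfolding Y by (rule covered_subset) auto
  moreover have "covered ?K (BSeq {#} {#} {#} {#k#})"
    using k(2) by (simp add: covered_iff[of ?K])
  with covered_trans[OF assms(1) \<open>covered Y ?Y'\<close>]
  have "covered (BSeq G D (I + {#?K#}) (M + {#BSeq L T (TI + {#BSeq S P PI PM#}) TM#})) ?Y'"
    by (simp add: covered_add_imp)
  ultimately have "cik (bfill c ?Y')" by (rule assms(2))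
  then show ?thesis
    using cik.inter_bc[where c=c and G=Ga and D=Da and I=Ia and S=S' and P=P' and PI=PI' and PM=PM'
        and M=M' and L=L' and T=T' and TI=TI'' and TM=TM']
    by (simp add: Y M' m_eq TI'' k_eq)
qed

lemma cik_covered_step:
  assumes "covered (bfill c X) U"
    and "\<And>c' Y. covered X Y \<Longrightarrow>
      (\<And>X' Y'. covered X' Y' \<Longrightarrow> covered Y Y' \<Longrightarrow> covered (bfill c X') (bfill c' Y')) \<Longrightarrow>
      cik (bfill c' Y)"
  shows "cik U"
  using assms by (metis covered_bfillE)

lemmas cik_covered_rules =
  cik_ax_bot_covered cik_ax_top_covered cik_ax_at_covered
  cik_conjL_covered cik_conjR_covered cik_disjL_covered cik_disjR_covered
  cik_impL_covered cik_impR_covered cik_boxL_covered cik_boxR_covered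
  cik_diaL_covered cik_diaR_covered cik_trans_covered cik_inter_fc_covered cik_inter_bc_covered

lemma cik_covered: "cik S \<Longrightarrow> covered S U \<Longrightarrow> cik U"
  by (induction arbitrary: U rule: cik.induct)
    (erule cik_covered_step, erule cik_covered_rules; metis)+

lemma cik_bfill_covered: "cik (bfill c X) \<Longrightarrow> covered X Y \<Longrightarrow> cik (bfill c Y)"
  using cik_covered covered_bfill by blast

lemma cik_set_mono:
  "cik (bfill c (BSeq G D I M)) \<Longrightarrow> set_mset G \<subseteq> set_mset G' \<Longrightarrow> set_mset D \<subseteq> set_mset D' \<Longrightarrow>
    set_mset I \<subseteq> set_mset I' \<Longrightarrow> set_mset M \<subseteq> set_mset M' \<Longrightarrow> cik (bfill c (BSeq G' D' I' M'))"
  using cik_bfill_covered covered_subset by blast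

section \<open>Translating NIKm proofs\<close>

primrec fl_ctx :: "'a pctx \<Rightarrow> 'a bctx" where
  "fl_ctx PHole = BHole"
| "fl_ctx (PCBlk I Ou B c) = BCMod I Ou {#} (image_mset fl B) (fl_ctx c)"

lemma fl_pfill: "fl (pfill c S) = bfill (fl_ctx c) (fl S)"
  by (induction c) auto

lemma bstar_fl: "bstar (fl S) = fl (pdown S)"
proof (induction S)
  case (PSeq I Ou B)
  then show ?case by (simp add: multiset.map_comp comp_def cong: image_mset_cong)
qed

lemma cik_fl_imp_in:
  assumes "cik (fl (pfill c (pplus P (pout {#A#}))))" and "cik (fl (pfill c (pplus P (pin {#B#}))))"
  shows "cik (fl (pfill c (pplus P (pin {#Imp A B#}))))"
proof -
  obtain Ip Op Bp where P: "P = PSeq Ip Op Bp" by (cases P)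
  have "cik (bfill (fl_ctx c) (BSeq (add_mset (Imp A B) Ip) (add_mset A Op) {#} (image_mset fl Bp)))"
    using assms(1) by (simp add: P fl_pfill pplus_def) (erule cik_set_mono; auto)
  with assms(2) show ?thesis by (auto simp: P fl_pfill pplus_def intro: cik.impL[simplified])
qed

lemma cik_fl_box_in:
  assumes "cik (fl (pfill c (pplus P (pblk (pplus D (pin {#A#}))))))"
  shows "cik (fl (pfill c (pplus P (PSeq {#Box A#} {#} {#D#}))))"
proof -
  obtain Ip Op Bp where P: "P = PSeq Ip Op Bp" by (cases P)
  obtain Id Od Bd where D: "D = PSeq Id Od Bd" by (cases D)
  have "cik (bfill (fl_ctx c) (BSeq (add_mset (Box A) Ip) Op {#}
      (add_mset (BSeq (add_mset A Id) Od {#} (image_mset fl Bd)) (image_mset fl Bp))))"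
    using assms by (simp add: P D fl_pfill pplus_def) (erule cik_set_mono; auto)
  then show ?thesis by (auto simp: P D fl_pfill pplus_def intro: cik.boxL[simplified])
qed

lemma cik_fl_dia_out:
  assumes "cik (fl (pfill c (pplus P (pblk (pplus D (pout {#A#}))))))"
  shows "cik (fl (pfill c (pplus P (PSeq {#} {#Dia A#} {#D#}))))"
proof -
  obtain Ip Op Bp where P: "P = PSeq Ip Op Bp" by (cases P)
  obtain Id Od Bd where D: "D = PSeq Id Od Bd" by (cases D)
  have "cik (bfill (fl_ctx c) (BSeq Ip (add_mset (Dia A) Op) {#}
      (add_mset (BSeq Id (add_mset A Od) {#} (image_mset fl Bd)) (image_mset fl Bp))))"
    using assms by (simp add: P D fl_pfill pplus_def) (erule cik_set_mono; auto)
  then show ?thesis by (auto simp: P D fl_pfill pplus_def intro: cik.diaR[simplified])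
qed

lemma cik_fl_contr_in:
  "cik (fl (pfill c (pplus P (pin {#A, A#})))) \<Longrightarrow> cik (fl (pfill c (pplus P (pin {#A#}))))"
  by (cases P) (simp add: fl_pfill pplus_def, erule cik_set_mono; auto)

lemma cik_fl_contr_out:
  "cik (fl (pfill c (pplus P (pout {#A, A#})))) \<Longrightarrow> cik (fl (pfill c (pplus P (pout {#A#}))))"
  by (cases P) (simp add: fl_pfill pplus_def, erule cik_set_mono; auto)

primrec add_imp :: "'a bseq \<Rightarrow> 'a bseq \<Rightarrow> 'a bseq" where
  "add_imp (BSeq G D I M) K = BSeq G D (add_mset K I) M"

lemma cik_add_imp_from_root:
  assumes "cik (bfill e (add_imp (fl (pfill c P)) (fl (pfill (pcdown c) (pplus (pdown P) Z)))))"
  shows "cik (bfill e (bfill (fl_ctx c) (add_imp (fl P) (fl Z))))"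
  using assms
proof (induction c arbitrary: e)
  case PHole
  obtain Ip Op Bp where P: "P = PSeq Ip Op Bp" by (cases P)
  obtain Iz Oz Bz where Z: "Z = PSeq Iz Oz Bz" by (cases Z)
  from PHole show ?case
    using cik_saturate[where Ms="image_mset fl Bp" and M="image_mset fl Bp" and e=e and G=Ip and D=Op
        and I="{#}" and S=Iz and P=Oz and PI="{#}" and PM="image_mset fl Bz"]
    by (simp add: P Z pplus_def multiset.map_comp comp_def bstar_fl add_ac)
next
  case (PCBlk I Ou B c)
  define Pc where "Pc = fl (pfill c P)"
  define W where "W = fl (pfill (pcdown c) (pplus (pdown P) Z))"
  obtain L T TI TM where Pc: "Pc = BSeq L T TI TM" by (cases Pc)
  obtain S Q QI QM where W: "W = BSeq S Q QI QM" by (cases W)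
  let ?M = "add_mset (add_imp Pc W) (image_mset fl B)"
  let ?K = "BSeq I {#} {#} (add_mset W (image_mset fl (image_mset pdown B)))"
  have "cik (bfill e (BSeq I Ou {#?K#} (add_mset Pc (image_mset fl B))))"
    using PCBlk.prems by (simp add: Pc_def W_def)
  \<comment> \<open>inter_bc below keeps W in the child as well, so the child is weakened first\<close>
  moreover have "covered (BSeq I Ou {#?K#} (add_mset Pc (image_mset fl B))) (BSeq I Ou {#?K#} ?M)"
    by (rule covered_replace_mod) (auto simp: Pc intro!: covered_subset)
  ultimately have "cik (bfill e (BSeq I Ou {#?K#} ?M))" by (rule cik_bfill_covered)
  then have "cik (bfill e (BSeq I Ou {#BSeq {#} {#} {#} {#W#}#} ?M))"
    using cik_saturate[where Ms="image_mset fl B" and M="?M" and e=e and G=I and D=Ou and I="{#}"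
        and S="{#}" and P="{#}" and PI="{#}" and PM="{#W#}"]
    by (simp add: multiset.map_comp comp_def bstar_fl)
  then have "cik (bfill e (BSeq I Ou {#} ?M))"
    using cik.inter_bc[where c=e and G=I and D=Ou and I="{#}" and S=S and P=Q and PI=QI and PM=QM
        and M="image_mset fl B" and L=L and T=T and TI=TI and TM=TM]
    by (simp add: Pc W)
  then have "cik (bfill (bcomp e (BCMod I Ou {#} (image_mset fl B) BHole)) (add_imp Pc W))"
    by (simp add: bfill_bcomp)
  then have "cik (bfill (bcomp e (BCMod I Ou {#} (image_mset fl B) BHole))
      (bfill (fl_ctx c) (add_imp (fl P) (fl Z))))"
    unfolding Pc_def W_def by (rule PCBlk.IH)
  then show ?case by (simp add: bfill_bcomp)
qed

lemma cik_fl_pfill_add_imp: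
  assumes "cik (fl (pfill (pcdown c) (pplus (pdown P) Z)))"
  shows "cik (bfill (fl_ctx c) (add_imp (fl P) (fl Z)))"
proof -
  obtain G D I M where root: "fl (pfill c P) = BSeq G D I M" by (cases "fl (pfill c P)")
  have "cik (add_imp (fl (pfill c P)) (fl (pfill (pcdown c) (pplus (pdown P) Z))))"
    using cik_bfill[OF assms, of "BCImp G D I M BHole"] by (simp add: root)
  then show ?thesis using cik_add_imp_from_root[where e=BHole] by simp
qed

lemma cik_fl_imp_out:
  assumes "cik (fl (pfill (pcdown c) (pplus (pdown P) (PSeq {#A#} {#B#} {#}))))"
  shows "cik (fl (pfill c (pplus P (pout {#Imp A B#}))))"
proof -
  obtain Ip Op Bp where P: "P = PSeq Ip Op Bp" by (cases P)
  from cik_fl_pfill_add_imp[OF assms] show ?thesis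
    using cik.impR[where c="fl_ctx c" and G=Ip and D=Op and I="{#}" and M="image_mset fl Bp"]
    by (simp add: P fl_pfill pplus_def)
qed

lemma cik_fl_box_out:
  assumes "cik (fl (pfill (pcdown c) (pplus (pdown P) (pblk (pout {#A#})))))"
  shows "cik (fl (pfill c (pplus P (pout {#Box A#}))))"
proof -
  obtain Ip Op Bp where P: "P = PSeq Ip Op Bp" by (cases P)
  from cik_fl_pfill_add_imp[OF assms] show ?thesis
    using cik.boxR[where c="fl_ctx c" and G=Ip and D=Op and I="{#}" and M="image_mset fl Bp"]
    by (simp add: P fl_pfill pplus_def)
qed

theorem theorem6p2:
  fixes \<Sigma> :: "'a pseq"
  assumes "nikm \<Sigma>"
  shows "cik (fl \<Sigma>)"
  using assms
proof (induction rule: nikm.induct)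
  case imp_out from imp_out.IH show ?case by (rule cik_fl_imp_out)
next
  case box_out from box_out.IH show ?case by (rule cik_fl_box_out)
next
  case imp_in from imp_in.IH show ?case by (rule cik_fl_imp_in)
next
  case box_in from box_in.IH show ?case by (rule cik_fl_box_in)
next
  case dia_out from dia_out.IH show ?case by (rule cik_fl_dia_out)
next
  case contr_in from contr_in.IH show ?case by (rule cik_fl_contr_in)
next
  case contr_out from contr_out.IH show ?case by (rule cik_fl_contr_out)
qed (auto simp: fl_pfill pplus_def split: pseq.split intro: cik.intros[simplified])

end
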